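(* Let $m\ge1$, $b_1,\dots,b_m>0$, $\sigma_1,\dots,\sigma_m\ge0$, and $\phi(\lambda)=\frac12\lambda^2-\sum_{j=1}^mb_j\sqrt{\lambda^2+\sigma_j}$ for $\lambda\ge0$. Then: (1) $\phi$ has at most one critical point $\lambda_0\in(0,\infty)$; if it exists, $\phi'(\lambda)>0$ for $\lambda>\lambda_0$ and $\phi'(\lambda)<0$ for $0<\lambda<\lambda_0$, $\phi''(\lambda)>0$ for $\lambda>\lambda_0$, and $\phi''$ has at most one zero in $(0,\lambda_0)$. If no such $\lambda_0$ exists, then $\phi''(\lambda)\ge0$ for all $\lambda\ge0$. (2) $\bigl(\phi''(\lambda)/\phi'(\lambda)^3\bigr)'\le0$ for all $\lambda\ne\lambda_0$ (i.e. at all $\lambda>0$ where $\phi'(\lambda)\ne0$). (3) If $\lambda_0>0$ exists, then $\phi'(\lambda)=\lambda\int_{\lambda_0}^{\lambda}\sum_{j=1}^m\frac{b_js}{(s^2+\sigma_j)^{3/2}}\,ds$ for all $\lambda>0$; if it does not exist, then $\phi'(\lambda)\ge\lambda\int_0^\lambda\sum_{j=1}^m\frac{b_js}{(s^2+\sigma_j)^{3/2}}\,ds$ for all $\lambda>0$. *)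

theory Defs
  imports "HOL-Analysis.Analysis"
begin

text \<open>The function phi(lambda) = lambda^2/2 - sum_{j=1}^m b_j sqrt(lambda^2 + sigma_j),
  written as a function on all of the reals (it is even); derivatives are taken with deriv.\<close>
definition phi :: "nat \<Rightarrow> (nat \<Rightarrow> real) \<Rightarrow> (nat \<Rightarrow> real) \<Rightarrow> real \<Rightarrow> real" where
  "phi m b \<sigma> t = t\<^sup>2 / 2 - (\<Sum>j=1..m. b j * sqrt (t\<^sup>2 + \<sigma> j))"

end

theory Submission imports Defs begin

text \<open>Write \<open>\<phi>'(\<lambda>) = \<lambda> F(\<lambda>)\<close> with \<open>F(\<lambda>) = 1 - \<Sum>\<^sub>j b\<^sub>j / \<surd>(\<lambda>\<^sup>2 + \<sigma>\<^sub>j)\<close>. The function \<open>F\<close>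
  is strictly increasing on \<open>(0, \<infinity>)\<close> with derivative the integrand of (3), so \<open>\<phi>'\<close> has at most
  one positive zero, changes sign there, and (3) is the fundamental theorem of calculus for \<open>F\<close>.
  Moreover \<open>\<phi>'' = F + \<lambda> F' = 1 - \<Sum>\<^sub>j b\<^sub>j \<sigma>\<^sub>j / (\<lambda>\<^sup>2 + \<sigma>\<^sub>j)\<^bsup>3/2\<^esup>\<close> is increasing, which gives
  the claims on \<open>\<phi>''\<close>. Without a positive zero, \<open>F > 0\<close> on \<open>(0, \<infinity>)\<close>, which forces every
  \<open>\<sigma>\<^sub>j > 0\<close> (else \<open>F(\<lambda>) \<le> 1 - b\<^sub>j/\<lambda>\<close>) and then \<open>F(0) \<ge> 0\<close> by continuity; this gives
  \<open>\<phi>'' \<ge> 0\<close> and the inequality in (3). For (2), \<open>(\<phi>''/\<phi>'\<^sup>3)' = (\<phi>''' \<phi>' - 3 \<phi>''\<^sup>2) / \<phi>'\<^sup>4\<close>, and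
  \<open>\<phi>''' \<phi>' = 3 F \<cdot> \<lambda>\<^sup>2 \<Sum>\<^sub>j b\<^sub>j \<sigma>\<^sub>j / (\<lambda>\<^sup>2 + \<sigma>\<^sub>j)\<^bsup>5/2\<^esup> \<le> 3 F (\<phi>'' - F) \<le> 3 \<phi>''\<^sup>2\<close>
  when \<open>F > 0\<close>, while \<open>\<phi>''' \<phi>' \<le> 0\<close> when \<open>F \<le> 0\<close>.\<close>

lemma DERIV_sqrt_square_add:
  fixes c x :: real
  assumes "0 < x\<^sup>2 + c"
  shows "((\<lambda>x. sqrt (x\<^sup>2 + c)) has_real_derivative x / sqrt (x\<^sup>2 + c)) (at x)"
  using assms by (auto intro!: derivative_eq_intros simp: field_simps)

lemma DERIV_divide_sqrt_square_add_power:
  fixes a c x :: real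
  assumes "0 < x\<^sup>2 + c"
  shows "((\<lambda>x. a / sqrt (x\<^sup>2 + c) ^ n)
           has_real_derivative - (a * n * x / sqrt (x\<^sup>2 + c) ^ (n + 2))) (at x)"
proof -
  have "0 < sqrt (x\<^sup>2 + c)" using assms by simp
  with assms show ?thesis
    by (auto intro!: derivative_eq_intros)
       (simp add: field_simps power_add; cases n; auto)
qed

lemma powr_three_halves:
  fixes y :: real
  assumes "0 < y"
  shows "y powr (3/2) = sqrt y ^ 3"
  using assms by (simp add: powr_half_sqrt_powr real_sqrt_power)

lemma sqrt_square_add_strict_mono:
  fixes c x y :: real
  assumes "0 \<le> x" "x < y"
  shows "sqrt (x\<^sup>2 + c) < sqrt (y\<^sup>2 + c)"
  using assms by (simp add: power_strict_mono)

lemma DERIV_divide_cube: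
  fixes p q :: "real \<Rightarrow> real"
  assumes "(p has_real_derivative q t) (at t)" "(q has_real_derivative q') (at t)" "p t \<noteq> 0"
  shows "((\<lambda>x. q x / p x ^ 3) has_real_derivative (q' * p t - 3 * (q t)\<^sup>2) / p t ^ 4) (at t)"
  using assms
  by (auto intro!: derivative_eq_intros
           simp: field_simps power2_eq_square power3_eq_cube power_numeral_reduce)

lemma mult_le_square_add:
  fixes u y z :: real
  assumes "0 \<le> z" "z \<le> y"
  shows "u * z \<le> (u + y)\<^sup>2"
proof (cases "u \<le> 0")
  case True
  then show ?thesis using assms(1) by (meson mult_nonpos_nonneg order_trans zero_le_power2)
next
  case False
  then have "u * z \<le> u * y" using assms(2) by simp
  also have "\<dots> \<le> (u + y)\<^sup>2"
    using False assms by (simp add: power2_eq_square algebra_simps add_increasing)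
  finally show ?thesis .
qed

locale phi_data =
  fixes m :: nat and b \<sigma> :: "nat \<Rightarrow> real"
begin

definition smooth_points :: "real set" where
  "smooth_points = {x. \<forall>j\<in>{1..m}. 0 < x\<^sup>2 + \<sigma> j}"

text \<open>\<open>phi_quot\<close> is the function \<open>F\<close> above; \<open>phi2\<close> and \<open>phi3\<close> are the closed forms of
  \<open>\<phi>''\<close> and \<open>\<phi>'''\<close> on \<open>smooth_points\<close>.\<close>

definition phi_quot :: "real \<Rightarrow> real" where
  "phi_quot x = 1 - (\<Sum>j=1..m. b j / sqrt (x\<^sup>2 + \<sigma> j))"

definition phi_quot_deriv :: "real \<Rightarrow> real" where
  "phi_quot_deriv x = (\<Sum>j=1..m. b j * x / sqrt (x\<^sup>2 + \<sigma> j) ^ 3)"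

definition phi2 :: "real \<Rightarrow> real" where
  "phi2 x = 1 - (\<Sum>j=1..m. b j * \<sigma> j / sqrt (x\<^sup>2 + \<sigma> j) ^ 3)"

definition phi3 :: "real \<Rightarrow> real" where
  "phi3 x = (\<Sum>j=1..m. 3 * b j * \<sigma> j * x / sqrt (x\<^sup>2 + \<sigma> j) ^ 5)"

lemma open_smooth_points: "open smooth_points"
proof -
  have "smooth_points = (\<Inter>j\<in>{1..m}. {x. 0 < x\<^sup>2 + \<sigma> j})"
    unfolding smooth_points_def by auto
  also have "open \<dots>"
    by (intro open_INT finite_atLeastAtMost ballI open_Collect_less continuous_intros)
  finally show ?thesis .
qed

lemma has_real_derivative_phi:
  assumes "x \<in> smooth_points"
  shows "(phi m b \<sigma> has_real_derivative x * phi_quot x) (at x)"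
proof -
  have summand: "((\<lambda>t. b j * sqrt (t\<^sup>2 + \<sigma> j))
                  has_real_derivative b j * (x / sqrt (x\<^sup>2 + \<sigma> j))) (at x)"
    if "j \<in> {1..m}" for j
    using assms that by (intro DERIV_cmult DERIV_sqrt_square_add) (auto simp: smooth_points_def)
  have "((\<lambda>t. t\<^sup>2 / 2) has_real_derivative x) (at x)"
    by (auto intro!: derivative_eq_intros)
  from DERIV_diff [OF this DERIV_sum [OF summand]]
  have "(phi m b \<sigma> has_real_derivative x - (\<Sum>j=1..m. b j * (x / sqrt (x\<^sup>2 + \<sigma> j)))) (at x)"
    unfolding phi_def [abs_def] .
  then show ?thesis
    by (simp add: phi_quot_def right_diff_distrib sum_distrib_left mult.commute)
qed

lemma has_real_derivative_phi_quot:
  assumes "x \<in> smooth_points"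
  shows "(phi_quot has_real_derivative phi_quot_deriv x) (at x)"
proof -
  have summand: "((\<lambda>t. b j / sqrt (t\<^sup>2 + \<sigma> j))
                  has_real_derivative - (b j * x / sqrt (x\<^sup>2 + \<sigma> j) ^ 3)) (at x)"
    if "j \<in> {1..m}" for j
    using DERIV_divide_sqrt_square_add_power [of x "\<sigma> j" "b j" 1] assms that
    by (simp add: smooth_points_def numeral_3_eq_3 del: power_Suc)
  have "(phi_quot has_real_derivative
          0 - (\<Sum>j=1..m. - (b j * x / sqrt (x\<^sup>2 + \<sigma> j) ^ 3))) (at x)"
    unfolding phi_quot_def [abs_def] by (rule DERIV_diff [OF DERIV_const DERIV_sum [OF summand]])
  then show ?thesis
    by (simp add: phi_quot_deriv_def sum_negf)
qed

lemma has_real_derivative_phi2: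
  assumes "x \<in> smooth_points"
  shows "(phi2 has_real_derivative phi3 x) (at x)"
proof -
  have summand: "((\<lambda>t. b j * \<sigma> j / sqrt (t\<^sup>2 + \<sigma> j) ^ 3)
                  has_real_derivative - (3 * b j * \<sigma> j * x / sqrt (x\<^sup>2 + \<sigma> j) ^ 5)) (at x)"
    if "j \<in> {1..m}" for j
    using DERIV_divide_sqrt_square_add_power [of x "\<sigma> j" "b j * \<sigma> j" 3] assms that
    by (simp add: smooth_points_def mult_ac)
  have "(phi2 has_real_derivative
          0 - (\<Sum>j=1..m. - (3 * b j * \<sigma> j * x / sqrt (x\<^sup>2 + \<sigma> j) ^ 5))) (at x)"
    unfolding phi2_def [abs_def] by (rule DERIV_diff [OF DERIV_const DERIV_sum [OF summand]])
  then show ?thesis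
    by (simp add: phi3_def sum_negf)
qed

lemma phi2_eq:
  assumes "x \<in> smooth_points"
  shows "phi2 x = phi_quot x + x * phi_quot_deriv x"
proof -
  have "b j * \<sigma> j / sqrt (x\<^sup>2 + \<sigma> j) ^ 3
          = b j / sqrt (x\<^sup>2 + \<sigma> j) - x * (b j * x / sqrt (x\<^sup>2 + \<sigma> j) ^ 3)"
    if "j \<in> {1..m}" for j
  proof -
    define q where "q = sqrt (x\<^sup>2 + \<sigma> j)"
    have "0 < x\<^sup>2 + \<sigma> j" using assms that by (auto simp: smooth_points_def)
    then have q: "0 < q" "q\<^sup>2 = x\<^sup>2 + \<sigma> j" unfolding q_def by auto
    then have "b j * \<sigma> j / q ^ 3 = (b j * q\<^sup>2 - x * (b j * x)) / q ^ 3"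
      by (simp add: algebra_simps power2_eq_square)
    also have "\<dots> = b j / q - x * (b j * x / q ^ 3)"
      using q(1) by (simp add: field_simps power2_eq_square power3_eq_cube)
    finally show ?thesis unfolding q_def .
  qed
  then show ?thesis
    unfolding phi2_def phi_quot_def phi_quot_deriv_def
    by (simp add: sum_subtractf sum_distrib_left)
qed

lemma deriv_phi:
  assumes "x \<in> smooth_points"
  shows "deriv (phi m b \<sigma>) x = x * phi_quot x"
  using has_real_derivative_phi [OF assms] by (rule DERIV_imp_deriv)

lemma has_real_derivative_deriv_phi:
  assumes "x \<in> smooth_points"
  shows "(deriv (phi m b \<sigma>) has_real_derivative phi2 x) (at x)"
proof (rule has_field_derivative_transform_within_open [OF _ open_smooth_points assms])
  show "((\<lambda>x. x * phi_quot x) has_real_derivative phi2 x) (at x)"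
    using has_real_derivative_phi_quot [OF assms] phi2_eq [OF assms]
    by (auto intro!: derivative_eq_intros)
qed (simp add: deriv_phi)

lemma deriv2_phi:
  assumes "x \<in> smooth_points"
  shows "deriv (deriv (phi m b \<sigma>)) x = phi2 x"
  using has_real_derivative_deriv_phi [OF assms] by (rule DERIV_imp_deriv)

lemma phi_quot_deriv_powr:
  assumes "x \<in> smooth_points"
  shows "phi_quot_deriv x = (\<Sum>j=1..m. b j * x / (x\<^sup>2 + \<sigma> j) powr (3/2))"
  unfolding phi_quot_deriv_def
  using assms by (intro sum.cong refl)
    (auto simp: smooth_points_def powr_three_halves)

lemma interval_integral_phi_quot_deriv:
  assumes "{min a c..max a c} \<subseteq> smooth_points"
  shows "(LBINT s=a..c. (\<Sum>j=1..m. b j * s / (s\<^sup>2 + \<sigma> j) powr (3/2))) = phi_quot c - phi_quot a"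
proof (rule interval_integral_FTC_finite)
  have pos: "0 < s\<^sup>2 + \<sigma> j" if "s \<in> {min a c..max a c}" "j \<in> {1..m}" for s j
    using assms that by (auto simp: smooth_points_def)
  show "continuous_on {min a c..max a c} (\<lambda>s. \<Sum>j=1..m. b j * s / (s\<^sup>2 + \<sigma> j) powr (3/2))"
    by (intro continuous_intros) (auto dest: pos)
next
  fix x assume "min a c \<le> x" "x \<le> max a c"
  then have "x \<in> smooth_points" using assms by auto
  then show "(phi_quot has_vector_derivative (\<Sum>j=1..m. b j * x / (x\<^sup>2 + \<sigma> j) powr (3/2)))
               (at x within {min a c..max a c})"
    using has_real_derivative_phi_quot phi_quot_deriv_powr
    by (simp add: has_real_derivative_iff_has_vector_derivative has_vector_derivative_at_within)
qed

lemma continuous_on_phi_quot: "S \<subseteq> smooth_points \<Longrightarrow> continuous_on S phi_quot"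
  by (intro continuous_at_imp_continuous_on ballI DERIV_isCont [OF has_real_derivative_phi_quot]) auto

end

locale phi_params = phi_data +
  assumes m_pos: "1 \<le> m"
    and b_pos: "\<And>j. j \<in> {1..m} \<Longrightarrow> 0 < b j"
    and sigma_nonneg: "\<And>j. j \<in> {1..m} \<Longrightarrow> 0 \<le> \<sigma> j"
begin

lemma nonzero_in_smooth_points: "x \<noteq> 0 \<Longrightarrow> x \<in> smooth_points"
  using sigma_nonneg by (auto simp: smooth_points_def add_pos_nonneg)

lemma sqrt_square_add_sigma_pos: "0 < x \<Longrightarrow> j \<in> {1..m} \<Longrightarrow> 0 < sqrt (x\<^sup>2 + \<sigma> j)"
  using sigma_nonneg by (simp add: add_pos_nonneg)

lemma phi_quot_strict_mono:
  assumes "0 < x" "x < y"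
  shows "phi_quot x < phi_quot y"
proof -
  have "b j / sqrt (y\<^sup>2 + \<sigma> j) < b j / sqrt (x\<^sup>2 + \<sigma> j)" if "j \<in> {1..m}" for j
    using sqrt_square_add_sigma_pos [OF assms(1) that] sqrt_square_add_strict_mono [of x y "\<sigma> j"]
      assms b_pos [OF that]
    by (intro divide_strict_left_mono) auto
  then have "(\<Sum>j=1..m. b j / sqrt (y\<^sup>2 + \<sigma> j)) < (\<Sum>j=1..m. b j / sqrt (x\<^sup>2 + \<sigma> j))"
    using m_pos by (intro sum_strict_mono) auto
  then show ?thesis unfolding phi_quot_def by linarith
qed

lemma phi_quot_deriv_pos: "0 < x \<Longrightarrow> 0 < phi_quot_deriv x"
  unfolding phi_quot_deriv_def using m_pos
  by (intro sum_pos divide_pos_pos mult_pos_pos b_pos zero_less_power sqrt_square_add_sigma_pos) auto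

lemma phi2_strict_mono:
  assumes "\<exists>j\<in>{1..m}. 0 < \<sigma> j" "0 < x" "x < y"
  shows "phi2 x < phi2 y"
proof -
  have cube_less: "0 < sqrt (x\<^sup>2 + \<sigma> j) ^ 3 \<and> sqrt (x\<^sup>2 + \<sigma> j) ^ 3 < sqrt (y\<^sup>2 + \<sigma> j) ^ 3"
    if "j \<in> {1..m}" for j
    using sqrt_square_add_sigma_pos [OF assms(2) that] sqrt_square_add_strict_mono [of x y "\<sigma> j"]
      assms(2,3) by (auto intro: power_strict_mono)
  have "b j * \<sigma> j / sqrt (y\<^sup>2 + \<sigma> j) ^ 3 \<le> b j * \<sigma> j / sqrt (x\<^sup>2 + \<sigma> j) ^ 3"
    if "j \<in> {1..m}" for j
    using cube_less [OF that] b_pos [OF that] sigma_nonneg [OF that]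
    by (smt (verit) divide_left_mono mult_pos_pos mult_nonneg_nonneg)
  moreover obtain k where k: "k \<in> {1..m}" "0 < \<sigma> k" using assms(1) by blast
  then have "b k * \<sigma> k / sqrt (y\<^sup>2 + \<sigma> k) ^ 3 < b k * \<sigma> k / sqrt (x\<^sup>2 + \<sigma> k) ^ 3"
    using cube_less [OF k(1)] b_pos [OF k(1)]
    by (smt (verit) divide_strict_left_mono mult_pos_pos)
  ultimately have "(\<Sum>j=1..m. b j * \<sigma> j / sqrt (y\<^sup>2 + \<sigma> j) ^ 3)
                    < (\<Sum>j=1..m. b j * \<sigma> j / sqrt (x\<^sup>2 + \<sigma> j) ^ 3)"
    using k(1) by (intro sum_strict_mono_ex1) auto
  then show ?thesis unfolding phi2_def by linarith
qed

lemma phi2_zero_unique: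
  assumes "0 < x" "0 < y" "phi2 x = 0" "phi2 y = 0"
  shows "x = y"
proof (cases "\<exists>j\<in>{1..m}. 0 < \<sigma> j")
  case True
  then show ?thesis
    using phi2_strict_mono [OF True] assms by (metis less_irrefl linorder_neqE_linordered_idom)
next
  case False
  then have "\<sigma> j = 0" if "j \<in> {1..m}" for j
    using sigma_nonneg [OF that] that by force
  then have "phi2 x = 1" by (simp add: phi2_def)
  then show ?thesis using assms(3) by simp
qed

lemma phi_quot_eventually_pos: "\<exists>T>0. \<forall>t\<ge>T. 0 < phi_quot t"
proof -
  define B where "B = (\<Sum>j=1..m. b j)"
  have B: "0 < B" unfolding B_def using m_pos by (intro sum_pos b_pos) auto
  have "0 < phi_quot t" if t: "B + 1 \<le> t" for t
  proof -
    have "b j / sqrt (t\<^sup>2 + \<sigma> j) \<le> b j / t" if j: "j \<in> {1..m}" for j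
    proof -
      have "t \<le> sqrt (t\<^sup>2 + \<sigma> j)" using sigma_nonneg [OF j] by (intro real_le_rsqrt) simp
      moreover have "0 < t" using t B by simp
      ultimately show ?thesis using b_pos [OF j] by (intro divide_left_mono mult_pos_pos) linarith+
    qed
    then have "(\<Sum>j=1..m. b j / sqrt (t\<^sup>2 + \<sigma> j)) \<le> B / t"
      unfolding B_def sum_divide_distrib by (rule sum_mono)
    also have "\<dots> < 1" using t B by simp
    finally show ?thesis unfolding phi_quot_def by linarith
  qed
  with B show ?thesis by (intro exI [of _ "B + 1"]) auto
qed

lemma phi_quot_pos_if_no_root:
  assumes no_root: "\<And>t. 0 < t \<Longrightarrow> phi_quot t \<noteq> 0" and "0 < t"
  shows "0 < phi_quot t"
proof (rule ccontr)
  assume "\<not> 0 < phi_quot t"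
  moreover obtain T where "0 < T" "\<And>s. T \<le> s \<Longrightarrow> 0 < phi_quot s"
    using phi_quot_eventually_pos by blast
  then have "0 \<le> phi_quot (max t T)" by (simp add: less_imp_le)
  moreover have "continuous_on {t..max t T} phi_quot"
    using \<open>0 < t\<close> by (intro continuous_on_phi_quot) (auto intro: nonzero_in_smooth_points)
  ultimately obtain s where "t \<le> s" "phi_quot s = 0"
    using IVT' [of phi_quot t 0 "max t T"] by force
  then show False using no_root \<open>0 < t\<close> by simp
qed

lemma sigma_pos_if_phi_quot_pos:
  assumes pos: "\<And>t. 0 < t \<Longrightarrow> 0 < phi_quot t" and j: "j \<in> {1..m}"
  shows "0 < \<sigma> j"
proof (rule ccontr)
  assume "\<not> 0 < \<sigma> j"
  then have "\<sigma> j = 0" using sigma_nonneg [OF j] by simp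
  define t where "t = b j / 2"
  have t: "0 < t" using b_pos [OF j] by (simp add: t_def)
  have "b j / sqrt (t\<^sup>2 + \<sigma> j) \<le> (\<Sum>i=1..m. b i / sqrt (t\<^sup>2 + \<sigma> i))"
    using j b_pos sigma_nonneg by (intro member_le_sum) (auto simp: less_imp_le)
  moreover have "b j / sqrt (t\<^sup>2 + \<sigma> j) = 2"
    using \<open>\<sigma> j = 0\<close> t by (simp add: t_def)
  ultimately have "phi_quot t \<le> -1" unfolding phi_quot_def by linarith
  with pos [OF t] show False by simp
qed

lemma phi_quot_zero_nonneg_if_pos:
  assumes pos: "\<And>t. 0 < t \<Longrightarrow> 0 < phi_quot t"
  shows "0 \<le> phi_quot 0"
proof -
  have "0 \<in> smooth_points"
    using sigma_pos_if_phi_quot_pos [OF pos] by (auto simp: smooth_points_def)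
  then have "(phi_quot \<longlongrightarrow> phi_quot 0) (at_right 0)"
    using DERIV_isCont [OF has_real_derivative_phi_quot] by (simp add: isCont_def filterlim_at_split)
  moreover have "\<forall>\<^sub>F t in at_right 0. 0 \<le> phi_quot t"
    using eventually_at_right_less by (rule eventually_mono) (simp add: pos less_imp_le)
  ultimately show ?thesis by (rule tendsto_lowerbound) simp
qed

lemma phi3_mult_le:
  assumes "0 < x"
  shows "phi3 x * (x * phi_quot x) \<le> 3 * (phi2 x)\<^sup>2"
proof -
  define A where "A = (\<Sum>j=1..m. b j / sqrt (x\<^sup>2 + \<sigma> j) ^ 3)"
  define C where "C = (\<Sum>j=1..m. b j * \<sigma> j / sqrt (x\<^sup>2 + \<sigma> j) ^ 5)"
  have x: "x \<in> smooth_points" using assms by (simp add: nonzero_in_smooth_points)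
  have C_nonneg: "0 \<le> C" unfolding C_def using assms
    by (intro sum_nonneg divide_nonneg_pos mult_nonneg_nonneg zero_less_power
          sqrt_square_add_sigma_pos sigma_nonneg) (auto simp: less_imp_le b_pos)
  have "C \<le> A" unfolding C_def A_def
  proof (rule sum_mono)
    fix j assume j: "j \<in> {1..m}"
    define q where "q = sqrt (x\<^sup>2 + \<sigma> j)"
    have q: "0 < q" "q\<^sup>2 = x\<^sup>2 + \<sigma> j"
      using sqrt_square_add_sigma_pos [OF assms j] sigma_nonneg [OF j] by (auto simp: q_def)
    have "b j * \<sigma> j / q ^ 5 \<le> b j * q\<^sup>2 / q ^ 5"
      using q b_pos [OF j] by (intro divide_right_mono mult_left_mono) auto
    also have "\<dots> = b j / q ^ 3"
      using q(1) by (simp add: field_simps power2_eq_square power3_eq_cube power_numeral_reduce)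
    finally show "b j * \<sigma> j / sqrt (x\<^sup>2 + \<sigma> j) ^ 5 \<le> b j / sqrt (x\<^sup>2 + \<sigma> j) ^ 3"
      unfolding q_def .
  qed
  then have "x\<^sup>2 * C \<le> x\<^sup>2 * A" by (simp add: mult_left_mono)
  moreover have "phi3 x = 3 * x * C" unfolding phi3_def C_def by (simp add: sum_distrib_left mult_ac)
  moreover have "phi2 x = phi_quot x + x\<^sup>2 * A"
    using phi2_eq [OF x] unfolding phi_quot_deriv_def A_def
    by (simp add: sum_distrib_left power2_eq_square mult_ac)
  ultimately show ?thesis
    using mult_le_square_add [of "x\<^sup>2 * C" "x\<^sup>2 * A" "phi_quot x"] C_nonneg
    by (simp add: power2_eq_square mult_ac)
qed

lemma deriv_phi_eq_0_iff: "0 < x \<Longrightarrow> deriv (phi m b \<sigma>) x = 0 \<longleftrightarrow> phi_quot x = 0"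
  by (simp add: deriv_phi nonzero_in_smooth_points)

lemma critical_point_unique:
  assumes "0 < x" "0 < y" "deriv (phi m b \<sigma>) x = 0" "deriv (phi m b \<sigma>) y = 0"
  shows "x = y"
  using assms phi_quot_strict_mono deriv_phi_eq_0_iff
  by (metis less_irrefl linorder_neqE_linordered_idom)

lemma deriv_phi_pos_above_critical:
  assumes "0 < l0" "deriv (phi m b \<sigma>) l0 = 0" "l0 < t"
  shows "0 < deriv (phi m b \<sigma>) t"
  using assms phi_quot_strict_mono [of l0 t]
  by (simp add: deriv_phi_eq_0_iff deriv_phi nonzero_in_smooth_points)

lemma deriv_phi_neg_below_critical:
  assumes "0 < l0" "deriv (phi m b \<sigma>) l0 = 0" "0 < t" "t < l0"
  shows "deriv (phi m b \<sigma>) t < 0"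
  using assms phi_quot_strict_mono [of t l0]
  by (simp add: deriv_phi_eq_0_iff deriv_phi nonzero_in_smooth_points mult_pos_neg)

lemma deriv2_phi_pos_above_critical:
  assumes "0 < l0" "deriv (phi m b \<sigma>) l0 = 0" "l0 < t"
  shows "0 < deriv (deriv (phi m b \<sigma>)) t"
proof -
  have t: "t \<in> smooth_points" using assms by (simp add: nonzero_in_smooth_points)
  have "0 < phi_quot t"
    using assms phi_quot_strict_mono [of l0 t] by (simp add: deriv_phi_eq_0_iff)
  with assms show ?thesis
    by (simp add: deriv2_phi [OF t] phi2_eq [OF t] phi_quot_deriv_pos add_pos_pos)
qed

lemma deriv2_phi_zero_unique:
  assumes "0 < x" "0 < y" "deriv (deriv (phi m b \<sigma>)) x = 0" "deriv (deriv (phi m b \<sigma>)) y = 0"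
  shows "x = y"
  using assms phi2_zero_unique by (simp add: deriv2_phi nonzero_in_smooth_points)

lemma phi_quot_pos_if_no_critical:
  assumes "\<not> (\<exists>l0>0. deriv (phi m b \<sigma>) l0 = 0)" "0 < t"
  shows "0 < phi_quot t"
  using assms by (intro phi_quot_pos_if_no_root) (auto simp: deriv_phi_eq_0_iff)

lemma smooth_points_if_no_critical:
  assumes "\<not> (\<exists>l0>0. deriv (phi m b \<sigma>) l0 = 0)"
  shows "x \<in> smooth_points"
  using sigma_pos_if_phi_quot_pos phi_quot_pos_if_no_critical [OF assms]
  by (auto simp: smooth_points_def add_nonneg_pos)

lemma phi_quot_nonneg_if_no_critical:
  assumes "\<not> (\<exists>l0>0. deriv (phi m b \<sigma>) l0 = 0)" "0 \<le> t"
  shows "0 \<le> phi_quot t"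
  using assms phi_quot_pos_if_no_critical [OF assms(1)]
    phi_quot_zero_nonneg_if_pos [OF phi_quot_pos_if_no_critical [OF assms(1)]]
  by (cases "t = 0") (auto simp: less_imp_le)

lemma deriv2_phi_nonneg_if_no_critical:
  assumes "\<not> (\<exists>l0>0. deriv (phi m b \<sigma>) l0 = 0)" "0 \<le> t"
  shows "0 \<le> deriv (deriv (phi m b \<sigma>)) t"
proof -
  have t: "t \<in> smooth_points" using smooth_points_if_no_critical [OF assms(1)] .
  have "0 \<le> t * phi_quot_deriv t"
    using assms(2) phi_quot_deriv_pos by (cases "t = 0") (auto simp: less_imp_le)
  with phi_quot_nonneg_if_no_critical [OF assms] show ?thesis
    by (simp add: deriv2_phi [OF t] phi2_eq [OF t])
qed

lemma deriv_quotient_nonpos: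
  assumes "0 < t" "deriv (phi m b \<sigma>) t \<noteq> 0"
  shows "deriv (\<lambda>x. deriv (deriv (phi m b \<sigma>)) x / deriv (phi m b \<sigma>) x ^ 3) t \<le> 0"
proof -
  let ?p = "deriv (phi m b \<sigma>)" and ?q = "deriv (deriv (phi m b \<sigma>))"
  have t: "t \<in> smooth_points" using assms by (simp add: nonzero_in_smooth_points)
  have "(?p has_real_derivative ?q t) (at t)"
    using has_real_derivative_deriv_phi [OF t] by (simp add: deriv2_phi [OF t])
  moreover have "(?q has_real_derivative phi3 t) (at t)"
    by (rule has_field_derivative_transform_within_open
          [OF has_real_derivative_phi2 [OF t] open_smooth_points t]) (simp add: deriv2_phi)
  ultimately have "deriv (\<lambda>x. ?q x / ?p x ^ 3) t = (phi3 t * ?p t - 3 * (?q t)\<^sup>2) / ?p t ^ 4"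
    using assms(2) by (intro DERIV_imp_deriv DERIV_divide_cube)
  also have "\<dots> \<le> 0"
    using phi3_mult_le [OF assms(1)]
    by (intro divide_nonpos_nonneg) (simp_all add: deriv_phi [OF t] deriv2_phi [OF t])
  finally show ?thesis .
qed

lemma deriv_phi_eq_integral:
  assumes "0 < l0" "deriv (phi m b \<sigma>) l0 = 0" "0 < t"
  shows "deriv (phi m b \<sigma>) t = t * (LBINT s=l0..t. (\<Sum>j=1..m. b j * s / (s\<^sup>2 + \<sigma> j) powr (3/2)))"
proof -
  have "{min l0 t..max l0 t} \<subseteq> smooth_points"
  proof
    fix x assume "x \<in> {min l0 t..max l0 t}"
    then have "0 < x" using assms by auto
    then show "x \<in> smooth_points" by (simp add: nonzero_in_smooth_points)
  qed
  from interval_integral_phi_quot_deriv [OF this] show ?thesis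
    using assms by (simp add: deriv_phi_eq_0_iff deriv_phi nonzero_in_smooth_points)
qed

lemma deriv_phi_ge_integral:
  assumes "\<not> (\<exists>l0>0. deriv (phi m b \<sigma>) l0 = 0)" "0 < t"
  shows "t * (LBINT s=0..t. (\<Sum>j=1..m. b j * s / (s\<^sup>2 + \<sigma> j) powr (3/2))) \<le> deriv (phi m b \<sigma>) t"
proof -
  have "(LBINT s=0..t. (\<Sum>j=1..m. b j * s / (s\<^sup>2 + \<sigma> j) powr (3/2))) = phi_quot t - phi_quot 0"
    using interval_integral_phi_quot_deriv [of 0 t] smooth_points_if_no_critical [OF assms(1)]
    by (simp add: zero_ereal_def subset_iff)
  moreover have "0 \<le> t * phi_quot 0"
    using assms phi_quot_nonneg_if_no_critical [OF assms(1), of 0] by simp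
  ultimately show ?thesis
    using assms(2) by (simp add: deriv_phi nonzero_in_smooth_points right_diff_distrib)
qed

end

theorem lemma6p5:
  fixes m :: nat and b \<sigma> :: "nat \<Rightarrow> real"
  assumes "m \<ge> 1"
    and "\<And>j. j \<in> {1..m} \<Longrightarrow> b j > 0"
    and "\<And>j. j \<in> {1..m} \<Longrightarrow> \<sigma> j \<ge> 0"
  defines "\<phi> \<equiv> phi m b \<sigma>"
  shows
    "(\<forall>x y. 0 < x \<and> 0 < y \<and> deriv \<phi> x = 0 \<and> deriv \<phi> y = 0 \<longrightarrow> x = y) \<and>
     (\<forall>l0 > 0. deriv \<phi> l0 = 0 \<longrightarrow>
        (\<forall>t > l0. deriv \<phi> t > 0) \<and>
        (\<forall>t. 0 < t \<and> t < l0 \<longrightarrow> deriv \<phi> t < 0) \<and>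
        (\<forall>t > l0. deriv (deriv \<phi>) t > 0) \<and>
        (\<forall>x y. 0 < x \<and> x < l0 \<and> 0 < y \<and> y < l0 \<and>
               deriv (deriv \<phi>) x = 0 \<and> deriv (deriv \<phi>) y = 0 \<longrightarrow> x = y)) \<and>
     ((\<not> (\<exists>l0 > 0. deriv \<phi> l0 = 0)) \<longrightarrow> (\<forall>t \<ge> 0. deriv (deriv \<phi>) t \<ge> 0)) \<and>
     (\<forall>t > 0. deriv \<phi> t \<noteq> 0 \<longrightarrow>
        deriv (\<lambda>x. deriv (deriv \<phi>) x / (deriv \<phi> x) ^ 3) t \<le> 0) \<and>
     (\<forall>l0 > 0. deriv \<phi> l0 = 0 \<longrightarrow>
        (\<forall>t > 0. deriv \<phi> t =
           t * (LBINT s=l0..t. (\<Sum>j=1..m. b j * s / (s\<^sup>2 + \<sigma> j) powr (3/2))))) \<and>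
     ((\<not> (\<exists>l0 > 0. deriv \<phi> l0 = 0)) \<longrightarrow>
        (\<forall>t > 0. deriv \<phi> t \<ge>
           t * (LBINT s=0..t. (\<Sum>j=1..m. b j * s / (s\<^sup>2 + \<sigma> j) powr (3/2)))))"
proof -
  interpret phi_params m b \<sigma> using assms(1-3) by unfold_locales auto
  show ?thesis
    unfolding \<phi>_def
    by (intro conjI allI impI; (elim conjE)?)
       (blast intro: critical_point_unique deriv_phi_pos_above_critical deriv_phi_neg_below_critical
          deriv2_phi_pos_above_critical deriv2_phi_zero_unique deriv2_phi_nonneg_if_no_critical
          deriv_quotient_nonpos deriv_phi_eq_integral deriv_phi_ge_integral)+
qed

end
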